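(* Assume $CA_2$. Then there are two $\omega_1$-dense sets of reals which are not order isomorphic.
   Context: A set $A\subseteq\mathbb R$ is $\omega_1$-dense if $|(a,b)\cap A|=\omega_1$ for all reals $a<b$. A type is a sequence $\tau=\{(m_k,n_{k+1},r_{k+1})\}_{k\in\omega}$ of natural numbers with $m_0=1$; $n_k\ge2$ for $k\ge1$; every $r\in\omega$ equals $r_k$ for infinitely many $k$; $m_k>r_{k+1}$; and $m_{k+1}=r_{k+1}+(m_k-r_{k+1})n_{k+1}$ for all $k$. For a set of ordinals $X$ and $\mathcal F\subseteq[X]^{<\omega}$, $\mathcal F_k$ is the set of elements of rank $k$ in $(\mathcal F,\subsetneq)$; $A\sqsubseteq B$ means $A\subseteq B$ and every element of $B$ below an element of $A$ is in $A$; $A<B$ means every element of $A$ is below every element of $B$. $\mathcal F$ is a construction scheme over $X$ of type $\tau$ if (1) every finite subset of $X$ lies in a member of $\mathcal F$; (2) $|F|=m_k$ for $F\in\mathcal F_k$; (3) $E\cap F\sqsubseteq E,F$ for $E,F\in\mathcal F_k$; (4) each $F\in\mathcal F_{k+1}$ is the union of uniquely determined $F_0,\dots,F_{n_{k+1}-1}\in\mathcal F_k$ forming a $\Delta$-system with root $R(F)$, $|R(F)|=r_{k+1}$, $R(F)<F_0\setminus R(F)<\dots<F_{n_{k+1}-1}\setminus R(F)$. For a construction scheme $\mathcal F$ over $\omega_1$, $l\ge1$, $F\in\mathcal F_l$ and finite $\mathcal C\subseteq[\omega_1]^{<\omega}$: $F$ captures $\mathcal C$ if $|\mathcal C|\le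 n_l$ and $\mathcal C$ can be enumerated as $\{c_i\}_{i<|\mathcal C|}$ with $c_i\subseteq F_i$, $c_i\setminus R(F)\neq\emptyset$ and $\phi_i[c_0]=c_i$ where $\phi_i:F_0\to F_i$ is the increasing bijection. $\mathcal F$ is $n$-capturing if for every uncountable $S\subseteq[\omega_1]^{<\omega}$ and every $k\in\omega$ there are $\mathcal C\in[S]^n$, $l>k$ and $F\in\mathcal F_l$ capturing $\mathcal C$. $CA_n$ is the statement: for every type $\tau$ with $n\le n_k$ for all $k\ge1$ there is an $n$-capturing construction scheme over $\omega_1$ of type $\tau$. *)

theory Defs
  imports Complex_Main "HOL-Library.Equipollence" "HOL-Library.Countable_Set"
begin

text \<open>The ordinal omega_1 is represented by a type 'w of class wellorder which is
uncountable and all of whose proper initial segments are countable (see the theorem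
assumptions). A set has cardinality omega_1 iff it is equipollent to UNIV of that type.\<close>

definition omega1_dense :: "'w itself \<Rightarrow> real set \<Rightarrow> bool" where
  "omega1_dense W A \<longleftrightarrow>
     (\<forall>a b::real. a < b \<longrightarrow> ({a<..<b} \<inter> A) \<approx> (UNIV :: 'w set))"

definition order_isomorphic :: "real set \<Rightarrow> real set \<Rightarrow> bool" where
  "order_isomorphic A B \<longleftrightarrow> (\<exists>f. bij_betw f A B \<and> strict_mono_on A f)"

text \<open>A type tau = ((m_k, n_(k+1), r_(k+1)))_k is given by three sequences m, n, r;
the values n 0 and r 0 are irrelevant.\<close>

definition is_type :: "(nat \<Rightarrow> nat) \<Rightarrow> (nat \<Rightarrow> nat) \<Rightarrow> (nat \<Rightarrow> nat) \<Rightarrow> bool" where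
  "is_type m n r \<longleftrightarrow>
     m 0 = 1 \<and>
     (\<forall>k\<ge>1. n k \<ge> 2) \<and>
     (\<forall>x. infinite {k. k \<ge> 1 \<and> r k = x}) \<and>
     (\<forall>k. m k > r (Suc k)) \<and>
     (\<forall>k. m (Suc k) = r (Suc k) + (m k - r (Suc k)) * n (Suc k))"

definition set_less :: "'a::linorder set \<Rightarrow> 'a set \<Rightarrow> bool" where
  "set_less A B \<longleftrightarrow> (\<forall>a\<in>A. \<forall>b\<in>B. a < b)"

definition init_seg :: "'a::linorder set \<Rightarrow> 'a set \<Rightarrow> bool" where
  "init_seg A B \<longleftrightarrow> A \<subseteq> B \<and> (\<forall>b\<in>B. \<forall>a\<in>A. b < a \<longrightarrow> b \<in> A)"

definition chain_below :: "'a set set \<Rightarrow> 'a set \<Rightarrow> nat \<Rightarrow> bool" where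
  "chain_below \<F> X k \<longleftrightarrow>
     (\<exists>E :: nat \<Rightarrow> 'a set. (\<forall>i\<le>k. E i \<in> \<F>) \<and> (\<forall>i<k. E i \<subset> E (Suc i)) \<and> E k = X)"

definition level :: "'a set set \<Rightarrow> nat \<Rightarrow> 'a set set" where
  "level \<F> k = {X \<in> \<F>. chain_below \<F> X k \<and> \<not> chain_below \<F> X (Suc k)}"

text \<open>Fs is the (normalized) decomposition of F in F_(k+1) into F_0,...,F_(n_(k+1)-1)
in F_k with root R.\<close>
definition decomposition ::
  "'a::linorder set set \<Rightarrow> (nat \<Rightarrow> nat) \<Rightarrow> (nat \<Rightarrow> nat) \<Rightarrow> nat \<Rightarrow> 'a set
     \<Rightarrow> (nat \<Rightarrow> 'a set) \<Rightarrow> 'a set \<Rightarrow> bool" where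
  "decomposition \<F> n r k F Fs R \<longleftrightarrow>
     (\<forall>i\<ge>n (Suc k). Fs i = {}) \<and>
     (\<forall>i<n (Suc k). Fs i \<in> level \<F> k) \<and>
     F = (\<Union>i<n (Suc k). Fs i) \<and>
     (\<forall>i<n (Suc k). \<forall>j<n (Suc k). i \<noteq> j \<longrightarrow> Fs i \<inter> Fs j = R) \<and>
     card R = r (Suc k) \<and>
     set_less R (Fs 0 - R) \<and>
     (\<forall>i. Suc i < n (Suc k) \<longrightarrow> set_less (Fs i - R) (Fs (Suc i) - R))"

definition construction_scheme ::
  "'a::linorder set \<Rightarrow> (nat \<Rightarrow> nat) \<Rightarrow> (nat \<Rightarrow> nat) \<Rightarrow> (nat \<Rightarrow> nat) \<Rightarrow> 'a set set \<Rightarrow> bool" where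
  "construction_scheme X m n r \<F> \<longleftrightarrow>
     (\<forall>F\<in>\<F>. finite F \<and> F \<subseteq> X) \<and>
     (\<forall>A. finite A \<and> A \<subseteq> X \<longrightarrow> (\<exists>F\<in>\<F>. A \<subseteq> F)) \<and>
     (\<forall>k. \<forall>F\<in>level \<F> k. card F = m k) \<and>
     (\<forall>k. \<forall>E\<in>level \<F> k. \<forall>F\<in>level \<F> k. init_seg (E \<inter> F) E \<and> init_seg (E \<inter> F) F) \<and>
     (\<forall>k. \<forall>F\<in>level \<F> (Suc k). \<exists>!Fs. \<exists>R. decomposition \<F> n r k F Fs R)"

definition captures ::
  "'a::linorder set set \<Rightarrow> (nat \<Rightarrow> nat) \<Rightarrow> (nat \<Rightarrow> nat) \<Rightarrow> nat \<Rightarrow> 'a set \<Rightarrow> 'a set set \<Rightarrow> bool" where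
  "captures \<F> n r l F \<C> \<longleftrightarrow>
     l \<ge> 1 \<and> F \<in> level \<F> l \<and> finite \<C> \<and> card \<C> \<le> n l \<and>
     (\<exists>Fs R. decomposition \<F> n r (l - 1) F Fs R \<and>
        (\<exists>c :: nat \<Rightarrow> 'a set.
           bij_betw c {..<card \<C>} \<C> \<and>
           (\<forall>i<card \<C>. c i \<subseteq> Fs i \<and> c i - R \<noteq> {} \<and>
              (\<exists>\<phi>. bij_betw \<phi> (Fs 0) (Fs i) \<and> strict_mono_on (Fs 0) \<phi> \<and> \<phi> ` c 0 = c i))))"

definition n_capturing ::
  "nat \<Rightarrow> (nat \<Rightarrow> nat) \<Rightarrow> (nat \<Rightarrow> nat) \<Rightarrow> 'a::linorder set set \<Rightarrow> bool" where
  "n_capturing N n r \<F> \<longleftrightarrow>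
     (\<forall>S :: 'a set set. (\<forall>s\<in>S. finite s) \<and> uncountable S \<longrightarrow>
        (\<forall>k. \<exists>\<C> \<subseteq> S. finite \<C> \<and> card \<C> = N \<and>
              (\<exists>l>k. \<exists>F\<in>level \<F> l. captures \<F> n r l F \<C>)))"

definition CA :: "'w::linorder itself \<Rightarrow> nat \<Rightarrow> bool" where
  "CA W N \<longleftrightarrow>
     (\<forall>m n r. is_type m n r \<and> (\<forall>k\<ge>1. N \<le> n k) \<longrightarrow>
        (\<exists>\<F> :: 'w set set. construction_scheme UNIV m n r \<F> \<and> n_capturing N n r \<F>))"

end

theory Submission
  imports Defs
begin

text \<open>Fix the type with \<open>n\<^sub>k = 2\<close> in which every root size recurs, and a 2-capturing
  construction scheme \<open>\<F>\<close> of that type. Give each countable ordinal \<open>\<alpha>\<close> the ternary digits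
  \<open>d\<^sub>k(\<alpha>)\<close>: 0, 1 or 2 according as \<open>\<alpha>\<close> lies in the root, the rest of the left block or the rest
  of the right block of a level-\<open>k\<close> set containing it. Coherence of the levels makes this well
  defined, and the digits \<open>d\<^sub>1(\<alpha>), \<dots>, d\<^sub>k(\<alpha>)\<close> only depend on the position of \<open>\<alpha>\<close> in a
  level-\<open>k\<close> set. Read in base 4 the digits give an injection \<open>code\<close> of \<open>\<omega>\<^sub>1\<close> into \<open>[0, 3]\<close>, and
  the increasing bijection between the two blocks of a set moves the non-root part of the left
  block upwards.

  Let \<open>A\<close> be the union of affine copies of the image of \<open>code\<close> in all rational intervals, and
  \<open>B = -A\<close>; both are \<open>\<omega>\<^sub>1\<close>-dense. An isomorphism \<open>A \<cong> B\<close> is an order-reversing map of \<open>A\<close>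
  into itself; restricted to one copy and pigeonholed on the rational interval of the image, it
  yields an uncountable \<open>D\<close> and \<open>H\<close> with \<open>code \<alpha> < code \<beta> \<Longrightarrow> code (H \<beta>) < code (H \<alpha>)\<close> on \<open>D\<close>.
  Capturing two of the pairs \<open>{\<alpha>, H \<alpha>}\<close> gives \<open>\<alpha> \<noteq> \<beta>\<close> in \<open>D\<close> moved upwards in both
  coordinates, a contradiction.\<close>

section \<open>A type with two blocks\<close>

definition binary_r :: "nat \<Rightarrow> nat" where
  "binary_r k = fst (prod_decode (k - 1))"

primrec binary_m :: "nat \<Rightarrow> nat" where
  "binary_m 0 = 1"
| "binary_m (Suc k) = 2 * binary_m k - binary_r (Suc k)"

lemma binary_r_Suc_le: "binary_r (Suc k) \<le> k"
  by (metis binary_r_def diff_Suc_1 le_prod_encode_1 prod.collapse prod_decode_inverse)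

lemma Suc_le_binary_m: "Suc k \<le> binary_m k"
proof (induction k)
  case (Suc k)
  then show ?case
    using binary_r_Suc_le[of k] by simp
qed simp

lemma binary_r_less_m: "binary_r (Suc k) < binary_m k"
  using binary_r_Suc_le[of k] Suc_le_binary_m[of k] by simp

lemma binary_m_Suc: "binary_m (Suc k) = binary_r (Suc k) + (binary_m k - binary_r (Suc k)) * 2"
  using binary_r_less_m[of k] by simp

lemma infinite_binary_r_eq: "infinite {k. k \<ge> 1 \<and> binary_r k = x}"
proof -
  have "inj (\<lambda>b. Suc (prod_encode (x, b)))"
    by (auto simp: inj_def prod_encode_eq)
  then have "infinite (range (\<lambda>b. Suc (prod_encode (x, b))))"
    using finite_imageD by blast
  moreover have "range (\<lambda>b. Suc (prod_encode (x, b))) \<subseteq> {k. k \<ge> 1 \<and> binary_r k = x}"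
    by (auto simp: binary_r_def)
  ultimately show ?thesis
    using finite_subset by blast
qed

lemma is_type_binary: "is_type binary_m (\<lambda>_. 2) binary_r"
  unfolding is_type_def using infinite_binary_r_eq binary_r_less_m binary_m_Suc by auto

definition pos_in :: "'a::linorder set \<Rightarrow> 'a \<Rightarrow> nat" where
  "pos_in G a = card {y \<in> G. y < a}"

lemma pos_in_less_card: "finite G \<Longrightarrow> a \<in> G \<Longrightarrow> pos_in G a < card G"
  unfolding pos_in_def by (rule psubset_card_mono) auto

lemma strict_mono_on_pos_in:
  assumes "finite G"
  shows "strict_mono_on G (pos_in G)"
proof (rule strict_mono_onI)
  fix a b assume "a \<in> G" "b \<in> G" "a < b"
  then have "{y \<in> G. y < a} \<subset> {y \<in> G. y < b}"
    by auto
  then show "pos_in G a < pos_in G b"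
    unfolding pos_in_def using assms by (simp add: psubset_card_mono)
qed

lemma pos_in_image:
  assumes "finite G" "bij_betw \<phi> G H" "strict_mono_on G \<phi>" "a \<in> G"
  shows "pos_in H (\<phi> a) = pos_in G a"
proof -
  have "{y \<in> H. y < \<phi> a} = \<phi> ` {y \<in> G. y < a}"
    using assms(2,4) strict_mono_on_less[OF assms(3)] by (auto simp: bij_betw_def)
  moreover have "inj_on \<phi> {y \<in> G. y < a}"
    using assms(2) by (auto simp: bij_betw_def intro: inj_on_subset)
  ultimately show ?thesis
    unfolding pos_in_def by (simp add: card_image)
qed

lemma ordered_doubleton_eq:
  fixes a b c d :: "'a::order"
  assumes "{a, b} = {c, d}" "a < b" "c < d"
  shows "a = c" "b = d"
  using assms unfolding doubleton_eq_iff by auto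

lemma uncountable_image_doubletons:
  fixes u v :: "'a \<Rightarrow> 'b::order"
  assumes "uncountable D" "\<And>a. a \<in> D \<Longrightarrow> u a < v a" "inj_on u D"
  shows "uncountable ((\<lambda>a. {u a, v a}) ` D)"
proof -
  have "inj_on (\<lambda>a. {u a, v a}) D"
  proof (rule inj_onI)
    fix a a' assume "a \<in> D" "a' \<in> D" "{u a, v a} = {u a', v a'}"
    then have "u a = u a'"
      using ordered_doubleton_eq(1) assms(2) by blast
    then show "a = a'"
      using inj_onD[OF assms(3) _ \<open>a \<in> D\<close> \<open>a' \<in> D\<close>] by blast
  qed
  then show ?thesis
    using assms(1) countable_image_inj_on by blast
qed

section \<open>Construction schemes with two blocks\<close>

locale binary_scheme =
  fixes \<F> :: "'a::linorder set set"
  assumes scheme: "construction_scheme UNIV binary_m (\<lambda>_. 2) binary_r \<F>"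
begin

abbreviation splits :: "nat \<Rightarrow> 'a set \<Rightarrow> (nat \<Rightarrow> 'a set) \<Rightarrow> 'a set \<Rightarrow> bool" where
  "splits k F Fs R \<equiv> decomposition \<F> (\<lambda>_. 2) binary_r k F Fs R"

lemma level_subset: "level \<F> k \<subseteq> \<F>"
  by (auto simp: level_def)

lemma finite_member: "F \<in> \<F> \<Longrightarrow> finite F"
  using scheme by (simp add: construction_scheme_def)

lemma card_level: "F \<in> level \<F> k \<Longrightarrow> card F = binary_m k"
  using scheme by (simp add: construction_scheme_def)

lemma init_seg_level_Int: "E \<in> level \<F> k \<Longrightarrow> F \<in> level \<F> k \<Longrightarrow> init_seg (E \<inter> F) E"
  using scheme by (simp add: construction_scheme_def)

lemma ex_splits: "F \<in> level \<F> (Suc k) \<Longrightarrow> \<exists>Fs R. splits k F Fs R"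
  using scheme unfolding construction_scheme_def by (meson ex1_implies_ex)

lemma ex_member_superset: "finite A \<Longrightarrow> \<exists>F\<in>\<F>. A \<subseteq> F"
  using scheme by (simp add: construction_scheme_def)

lemma splitsD:
  assumes "splits k F Fs R"
  shows "Fs 0 \<in> level \<F> k" "Fs 1 \<in> level \<F> k" "F = Fs 0 \<union> Fs 1" "Fs 0 \<inter> Fs 1 = R"
    "card R = binary_r (Suc k)" "set_less R (Fs 0 - R)" "set_less (Fs 0 - R) (Fs 1 - R)"
proof -
  have "{..<2::nat} = {0, 1}"
    by auto
  then show "F = Fs 0 \<union> Fs 1"
    using assms by (simp add: decomposition_def)
  show "Fs 0 \<in> level \<F> k" "Fs 1 \<in> level \<F> k" "Fs 0 \<inter> Fs 1 = R" "card R = binary_r (Suc k)"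
    "set_less R (Fs 0 - R)" "set_less (Fs 0 - R) (Fs 1 - R)"
    using assms unfolding decomposition_def by auto
qed

lemma splits_finite:
  assumes "splits k F Fs R"
  shows "R \<subseteq> Fs 0" "R \<subseteq> Fs 1" "finite (Fs 0)" "finite (Fs 1)" "finite R" "finite F"
    "card (Fs 0) = binary_m k" "card (Fs 1) = binary_m k"
proof -
  note s = splitsD[OF assms]
  show "R \<subseteq> Fs 0" "R \<subseteq> Fs 1"
    using s(4) by auto
  moreover show "finite (Fs 0)" "finite (Fs 1)"
    using s(1,2) level_subset finite_member by auto
  ultimately show "finite R" "finite F"
    using s(3) finite_subset by auto
  show "card (Fs 0) = binary_m k" "card (Fs 1) = binary_m k"
    using s(1,2) card_level by auto
qed

lemma splits_less:
  assumes "splits k F Fs R"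
  shows "\<And>a b. a \<in> Fs 0 \<Longrightarrow> b \<in> Fs 1 - R \<Longrightarrow> a < b"
    and "\<And>a b. a \<in> R \<Longrightarrow> b \<in> F - R \<Longrightarrow> a < b"
proof -
  note s = splitsD[OF assms] and f = splits_finite[OF assms]
  have "card R < card (Fs 0)"
    using s(5) f(7) binary_r_less_m by simp
  then have "\<not> Fs 0 \<subseteq> R"
    using card_mono[OF f(5)] by (meson leD)
  then obtain z where z: "z \<in> Fs 0 - R"
    by blast
  show less_right: "a < b" if "a \<in> Fs 0" "b \<in> Fs 1 - R" for a b
  proof (cases "a \<in> R")
    case True
    then have "a < z"
      using s(6) z by (auto simp: set_less_def)
    also have "z < b"
      using s(7) z that(2) by (auto simp: set_less_def)
    finally show ?thesis .
  qed (use s(7) that in \<open>auto simp: set_less_def\<close>)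
  show "a < b" if "a \<in> R" "b \<in> F - R" for a b
  proof (cases "b \<in> Fs 0")
    case True
    then show ?thesis
      using s(6) that by (auto simp: set_less_def)
  next
    case False
    then show ?thesis
      using that s(3) f(1) less_right by auto
  qed
qed

lemma pos_in_level_eq:
  assumes "G \<in> level \<F> k" "G' \<in> level \<F> k" "a \<in> G" "a \<in> G'"
  shows "pos_in G a = pos_in G' a"
proof -
  have "init_seg (G \<inter> G') G" "init_seg (G' \<inter> G) G'"
    using init_seg_level_Int assms(1,2) by blast+
  then have "{y \<in> G. y < a} = {y \<in> G'. y < a}"
    using assms(3,4) unfolding init_seg_def by blast
  then show ?thesis
    by (simp add: pos_in_def)
qed

lemma pos_in_splits_left:
  assumes "splits k F Fs R" "a \<in> Fs 0"
  shows "pos_in F a = pos_in (Fs 0) a" "pos_in F a < binary_m k"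
proof -
  note s = splitsD[OF assms(1)] and f = splits_finite[OF assms(1)]
  have "y \<in> Fs 0" if "y \<in> F" "y < a" for y
    using splits_less(1)[OF assms(1,2), of y] that s(3,4) by auto
  then have "{y \<in> F. y < a} = {y \<in> Fs 0. y < a}"
    using s(3) by auto
  then show "pos_in F a = pos_in (Fs 0) a"
    by (simp add: pos_in_def)
  then show "pos_in F a < binary_m k"
    using pos_in_less_card[OF f(3) assms(2)] f(7) by simp
qed

lemma pos_in_splits_right:
  assumes "splits k F Fs R" "a \<in> Fs 1 - R"
  shows "binary_m k \<le> pos_in F a"
    "pos_in (Fs 1) a = pos_in F a - (binary_m k - binary_r (Suc k))"
proof -
  note s = splitsD[OF assms(1)] and f = splits_finite[OF assms(1)]
  define T where "T = {y \<in> Fs 1 - R. y < a}"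
  have "finite T"
    using f(4) by (simp add: T_def)
  have "{y \<in> F. y < a} = Fs 0 \<union> T" "Fs 0 \<inter> T = {}"
    using s(3,4) splits_less(1)[OF assms(1) _ assms(2)] by (auto simp: T_def)
  then have left: "pos_in F a = binary_m k + card T"
    using f(3,7) \<open>finite T\<close> by (simp add: pos_in_def card_Un_disjoint)
  have "{y \<in> Fs 1. y < a} = R \<union> T" "R \<inter> T = {}"
    using f(2) splits_less(2)[OF assms(1), of _ a] assms(2) s(3) by (auto simp: T_def)
  then have right: "pos_in (Fs 1) a = binary_r (Suc k) + card T"
    using s(5) f(5) \<open>finite T\<close> by (simp add: pos_in_def card_Un_disjoint)
  show "binary_m k \<le> pos_in F a"
    using left by simp
  show "pos_in (Fs 1) a = pos_in F a - (binary_m k - binary_r (Suc k))"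
    using left right binary_r_less_m[of k] by simp
qed

lemma pos_in_splits_nonroot:
  assumes "splits k F Fs R" "a \<in> Fs 0 - R"
  shows "binary_r (Suc k) \<le> pos_in F a"
proof -
  note s = splitsD[OF assms(1)] and f = splits_finite[OF assms(1)]
  have "R \<subseteq> {y \<in> F. y < a}"
    using splits_less(2)[OF assms(1), of _ a] f(1) assms(2) s(3) by auto
  then have "card R \<le> pos_in F a"
    unfolding pos_in_def using f(6) by (simp add: card_mono)
  then show ?thesis
    using s(5) by simp
qed

lemma pos_in_splits_root:
  assumes "splits k F Fs R" "\<rho> \<in> R"
  shows "pos_in (Fs 1) \<rho> = pos_in (Fs 0) \<rho>"
proof -
  note s = splitsD[OF assms(1)] and f = splits_finite[OF assms(1)]
  have "y \<in> R" if "y \<in> F" "y < \<rho>" for y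
    using splits_less(2)[OF assms(1,2), of y] that by (meson DiffI not_less_iff_gr_or_eq)
  then have "{y \<in> Fs i. y < \<rho>} = {y \<in> R. y < \<rho>}" if "i = 0 \<or> i = 1" for i
    using f(1,2) s(3) that by auto
  then show ?thesis
    unfolding pos_in_def by metis
qed

end

section \<open>Digits\<close>

text \<open>A set of level \<open>k + 1\<close> consists of a root of size \<open>binary_r (k + 1)\<close> followed by the rest
  of two blocks of size \<open>binary_m k\<close>. The digit of position \<open>p\<close> in it is 0 in the root, 1 in the rest of
  the left block and 2 in the rest of the right block; \<open>pos_in_block k p\<close> is the position of the
  same element inside its block. Descending through the blocks, \<open>digit_at j k p\<close> is the
  \<open>k\<close>-th digit of the element at position \<open>p\<close> of a level-\<open>j\<close> set.\<close>

definition block_digit :: "nat \<Rightarrow> nat \<Rightarrow> nat" where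
  "block_digit k p = (if p < binary_r k then 0 else if p < binary_m (k - 1) then 1 else 2)"

definition pos_in_block :: "nat \<Rightarrow> nat \<Rightarrow> nat" where
  "pos_in_block k p = (if p < binary_m k then p else p - (binary_m k - binary_r (Suc k)))"

primrec digit_at :: "nat \<Rightarrow> nat \<Rightarrow> nat \<Rightarrow> nat" where
  "digit_at 0 k p = 0"
| "digit_at (Suc j) k p =
    (if k = Suc j then block_digit (Suc j) p else digit_at j k (pos_in_block j p))"

lemma block_digit_le: "block_digit k p \<le> 2"
  by (simp add: block_digit_def)

lemma digit_at_inj:
  assumes "p < binary_m j" "q < binary_m j" "p \<noteq> q"
  shows "\<exists>k. 1 \<le> k \<and> k \<le> j \<and> digit_at j k p \<noteq> digit_at j k q"
  using assms
proof (induction j arbitrary: p q)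
  case (Suc j)
  show ?case
  proof (cases "block_digit (Suc j) p = block_digit (Suc j) q")
    case True
    have "pos_in_block j p < binary_m j" "pos_in_block j q < binary_m j"
      "pos_in_block j p \<noteq> pos_in_block j q"
      using True Suc.prems binary_r_less_m[of j] binary_m_Suc[of j]
      unfolding block_digit_def pos_in_block_def by (auto split: if_splits)
    then obtain k where
      "1 \<le> k" "k \<le> j" "digit_at j k (pos_in_block j p) \<noteq> digit_at j k (pos_in_block j q)"
      using Suc.IH by blast
    then show ?thesis
      by (intro exI[of _ k]) auto
  qed (intro exI[of _ "Suc j"], simp)
qed simp

context binary_scheme
begin

definition digit :: "nat \<Rightarrow> 'a \<Rightarrow> nat" where
  "digit k a = block_digit k (pos_in (SOME G. G \<in> level \<F> k \<and> a \<in> G) a)"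

lemma digit_le: "digit k a \<le> 2"
  by (simp add: digit_def block_digit_le)

lemma digit_eq:
  assumes "G \<in> level \<F> k" "a \<in> G"
  shows "digit k a = block_digit k (pos_in G a)"
proof -
  let ?G = "SOME G. G \<in> level \<F> k \<and> a \<in> G"
  have "?G \<in> level \<F> k \<and> a \<in> ?G"
    using assms by (rule someI[where P = "\<lambda>G. G \<in> level \<F> k \<and> a \<in> G", OF conjI])
  then have "pos_in ?G a = pos_in G a"
    using pos_in_level_eq assms by blast
  then show ?thesis
    by (simp add: digit_def)
qed

lemma ex_level_pos_in_block:
  assumes "G \<in> level \<F> (Suc j)" "a \<in> G"
  obtains G' where "G' \<in> level \<F> j" "a \<in> G'" "pos_in G' a = pos_in_block j (pos_in G a)"
proof -
  obtain Gs Q where split: "splits j G Gs Q"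
    using ex_splits[OF assms(1)] by blast
  note s = splitsD[OF split]
  show ?thesis
  proof (cases "a \<in> Gs 0")
    case True
    then show ?thesis
      using that[of "Gs 0"] pos_in_splits_left[OF split True] s(1) by (simp add: pos_in_block_def)
  next
    case False
    then have right: "a \<in> Gs 1 - Q"
      using assms(2) s(3,4) by auto
    then show ?thesis
      using that[of "Gs 1"] pos_in_splits_right[OF split right] s(2) by (simp add: pos_in_block_def)
  qed
qed

lemma digit_eq_digit_at:
  assumes "G \<in> level \<F> j" "a \<in> G" "1 \<le> k" "k \<le> j"
  shows "digit k a = digit_at j k (pos_in G a)"
  using assms
proof (induction j arbitrary: G)
  case (Suc j)
  show ?case
  proof (cases "k = Suc j")
    case True
    then show ?thesis
      using digit_eq[OF Suc.prems(1,2)] by simp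
  next
    case False
    obtain G' where G': "G' \<in> level \<F> j" "a \<in> G'" "pos_in G' a = pos_in_block j (pos_in G a)"
      using ex_level_pos_in_block[OF Suc.prems(1,2)] .
    have "digit k a = digit_at j k (pos_in G' a)"
      using Suc.IH[OF G'(1,2)] Suc.prems(3,4) False by simp
    then show ?thesis
      using G'(3) False by simp
  qed
qed simp

lemma chain_below_le_card:
  assumes "chain_below \<F> F k" "F \<in> \<F>"
  shows "k \<le> card F"
proof -
  obtain E where E: "\<forall>i\<le>k. E i \<in> \<F>" "\<forall>i<k. E i \<subset> E (Suc i)" "E k = F"
    using assms(1) unfolding chain_below_def by blast
  have "i \<le> card (E i)" if "i \<le> k" for i
    using that
  proof (induction i)
    case (Suc i)
    have "finite (E (Suc i))" "E i \<subset> E (Suc i)"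
      using E(1,2) Suc.prems finite_member by auto
    then have "card (E i) < card (E (Suc i))"
      by (simp add: psubset_card_mono)
    then show ?case
      using Suc by simp
  qed simp
  then show ?thesis
    using E(3) by auto
qed

lemma ex_level:
  assumes "F \<in> \<F>"
  obtains j where "F \<in> level \<F> j"
proof -
  let ?P = "\<lambda>k. chain_below \<F> F k"
  have "?P 0"
    unfolding chain_below_def using assms by (intro exI[of _ "\<lambda>_. F"]) simp
  have bound: "\<And>k. ?P k \<Longrightarrow> k \<le> card F"
    using chain_below_le_card assms by blast
  define j where "j = (GREATEST k. ?P k)"
  have "?P j"
    unfolding j_def using GreatestI_nat[of ?P 0 "card F"] \<open>?P 0\<close> bound by blast
  moreover have "\<not> ?P (Suc j)"
  proof
    assume "?P (Suc j)"
    then have "Suc j \<le> j"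
      using Greatest_le_nat[of ?P "Suc j" "card F"] bound unfolding j_def by blast
    then show False
      by simp
  qed
  ultimately show ?thesis
    using that assms by (auto simp: level_def)
qed

end

section \<open>Base-4 expansions\<close>

lemma summable_bounded_quarter_powers:
  assumes "\<And>i. \<bar>c i\<bar> \<le> (2::real)"
  shows "summable (\<lambda>i. c i * (1/4) ^ i)"
proof (rule summable_comparison_test)
  show "\<exists>N. \<forall>i\<ge>N. norm (c i * (1/4::real) ^ i) \<le> 2 * (1/4) ^ i"
    using assms by (auto simp: abs_mult intro!: mult_right_mono)
  show "summable (\<lambda>i. 2 * (1/4::real) ^ i)"
    by (intro summable_mult summable_geometric) simp
qed

lemma suminf_quarter_powers_pos:
  assumes "\<And>i. \<bar>c i\<bar> \<le> (2::real)" "c 0 \<ge> 1"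
  shows "(\<Sum>i. c i * (1/4) ^ i) > 0"
proof -
  define f where "f i = c i * (1/4::real) ^ i" for i
  have "summable f"
    unfolding f_def by (rule summable_bounded_quarter_powers[OF assms(1)])
  then have "summable (\<lambda>i. f (Suc i))"
    by (simp add: summable_Suc_iff)
  have geometric: "summable (\<lambda>i. (1/4::real) ^ i)" "(\<Sum>i. (1/4::real) ^ i) = 4/3"
    using summable_geometric[of "1/4::real"] suminf_geometric[of "1/4::real"] by simp_all
  have "- (1/2) * (1/4::real) ^ i \<le> f (Suc i)" for i
  proof -
    have "-2 * (1/4::real) ^ Suc i \<le> c (Suc i) * (1/4) ^ Suc i"
      using assms(1)[of "Suc i"] by (intro mult_right_mono) auto
    then show ?thesis
      by (simp add: f_def)
  qed
  then have "(\<Sum>i. - (1/2) * (1/4::real) ^ i) \<le> (\<Sum>i. f (Suc i))"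
    using summable_mult[OF geometric(1)] \<open>summable (\<lambda>i. f (Suc i))\<close> by (rule suminf_le)
  moreover have "(\<Sum>i. - (1/2) * (1/4::real) ^ i) = - 2/3"
    using suminf_mult[OF geometric(1), of "-(1/2)"] geometric(2) by simp
  moreover have "(\<Sum>i. f (Suc i)) = suminf f - f 0"
    by (rule suminf_split_head[OF \<open>summable f\<close>])
  moreover have "f 0 \<ge> 1"
    using assms(2) by (simp add: f_def)
  ultimately show ?thesis
    unfolding f_def by linarith
qed

lemma suminf_quarter_powers_pos_leading:
  assumes "\<And>i. \<bar>c i\<bar> \<le> (2::real)" "\<And>i. i < n \<Longrightarrow> c i = 0" "c n \<ge> 1"
  shows "(\<Sum>i. c i * (1/4) ^ i) > 0"
proof -
  define f where "f i = c i * (1/4::real) ^ i" for i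
  have "summable f"
    unfolding f_def by (rule summable_bounded_quarter_powers[OF assms(1)])
  then have "suminf f = (\<Sum>i. f (i + n)) + sum f {..<n}"
    by (rule suminf_split_initial_segment)
  moreover have "sum f {..<n} = 0"
    using assms(2) by (simp add: f_def)
  moreover have "(\<lambda>i. f (i + n)) = (\<lambda>i. (1/4) ^ n * (c (i + n) * (1/4::real) ^ i))"
    by (simp add: f_def power_add fun_eq_iff)
  moreover have "summable (\<lambda>i. c (i + n) * (1/4::real) ^ i)"
    using assms(1) by (rule summable_bounded_quarter_powers)
  moreover have "(\<Sum>i. c (i + n) * (1/4::real) ^ i) > 0"
    using assms(1,3) by (intro suminf_quarter_powers_pos) auto
  ultimately show ?thesis
    unfolding f_def by (simp add: suminf_mult)
qed

text \<open>Digit sequences are indexed from 1, like the levels of a construction scheme.\<close>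

definition quaternary :: "(nat \<Rightarrow> nat) \<Rightarrow> real" where
  "quaternary d = (\<Sum>i. real (d (Suc i)) * (1/4) ^ i)"

lemma summable_quaternary:
  assumes "\<And>k. d k \<le> 2"
  shows "summable (\<lambda>i. real (d (Suc i)) * (1/4::real) ^ i)"
  by (rule summable_bounded_quarter_powers) (use assms in auto)

lemma quaternary_less:
  assumes "\<And>k. d k \<le> 2" "\<And>k. e k \<le> 2" "1 \<le> l"
    and "\<And>k. 1 \<le> k \<Longrightarrow> k < l \<Longrightarrow> d k = e k" "d l < e l"
  shows "quaternary d < quaternary e"
proof -
  define c where "c i = real (e (Suc i)) - real (d (Suc i))" for i
  have "quaternary e - quaternary d = (\<Sum>i. c i * (1/4::real) ^ i)"
    unfolding quaternary_def c_def
    using suminf_diff[OF summable_quaternary[OF assms(2)] summable_quaternary[OF assms(1)]]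
    by (simp add: left_diff_distrib)
  moreover have "(\<Sum>i. c i * (1/4::real) ^ i) > 0"
  proof (rule suminf_quarter_powers_pos_leading[where n = "l - 1"])
    show "\<bar>c i\<bar> \<le> 2" for i
      using assms(1,2)[of "Suc i"] by (simp add: c_def)
    show "c i = 0" if "i < l - 1" for i
      using assms(4)[of "Suc i"] that by (simp add: c_def)
    show "1 \<le> c (l - 1)"
      using assms(3,5) by (simp add: c_def)
  qed
  ultimately show ?thesis
    by simp
qed

lemma quaternary_neq:
  assumes "\<And>k. d k \<le> 2" "\<And>k. e k \<le> 2" "1 \<le> k" "d k \<noteq> e k"
  shows "quaternary d \<noteq> quaternary e"
proof -
  define l where "l = (LEAST k. 1 \<le> k \<and> d k \<noteq> e k)"
  have l: "1 \<le> l" "d l \<noteq> e l"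
    using LeastI[of "\<lambda>k. 1 \<le> k \<and> d k \<noteq> e k" k] assms(3,4) by (auto simp: l_def)
  have below: "\<And>k. 1 \<le> k \<Longrightarrow> k < l \<Longrightarrow> d k = e k"
    using not_less_Least l_def by blast
  show ?thesis
  proof (cases "d l < e l")
    case True
    have "quaternary d < quaternary e"
      by (rule quaternary_less[where l = l]) (use assms l below True in auto)
    then show ?thesis
      by simp
  next
    case False
    have "quaternary e < quaternary d"
      by (rule quaternary_less[where l = l]) (use assms l below False in auto)
    then show ?thesis
      by simp
  qed
qed

lemma quaternary_bounds:
  assumes "\<And>k. d k \<le> 2"
  shows "0 \<le> quaternary d" "quaternary d \<le> 3"
proof -
  note summable = summable_quaternary[OF assms]
  show "0 \<le> quaternary d"
    unfolding quaternary_def by (rule suminf_nonneg[OF summable]) simp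
  have geometric: "summable (\<lambda>i. (1/4::real) ^ i)" "(\<Sum>i. (1/4::real) ^ i) = 4/3"
    using summable_geometric[of "1/4::real"] suminf_geometric[of "1/4::real"] by simp_all
  have "quaternary d \<le> (\<Sum>i. 2 * (1/4::real) ^ i)"
    unfolding quaternary_def using summable summable_mult[OF geometric(1)]
    by (rule suminf_le[rotated]) (use assms in \<open>auto intro!: mult_right_mono\<close>)
  also have "\<dots> = 8/3"
    using suminf_mult[OF geometric(1), of 2] geometric(2) by simp
  finally show "quaternary d \<le> 3"
    by simp
qed

section \<open>Coding by reals\<close>

context binary_scheme
begin

definition code :: "'a \<Rightarrow> real" where
  "code a = quaternary (\<lambda>k. digit k a)"

lemma code_bounds: "0 \<le> code a" "code a \<le> 3"
  unfolding code_def using quaternary_bounds[OF digit_le] by auto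

lemma inj_code: "inj code"
proof (rule injI, rule ccontr)
  fix a b
  assume "code a = code b" "a \<noteq> b"
  obtain F where F: "F \<in> \<F>" "{a, b} \<subseteq> F"
    using ex_member_superset[of "{a, b}"] by auto
  obtain j where j: "F \<in> level \<F> j"
    using ex_level[OF F(1)] .
  have "finite F"
    using finite_member F(1) by blast
  then have "pos_in F a \<noteq> pos_in F b"
    using strict_mono_on_eq[OF strict_mono_on_pos_in] F(2) \<open>a \<noteq> b\<close> by auto
  moreover have "pos_in F x < binary_m j" if "x \<in> {a, b}" for x
    using pos_in_less_card[OF \<open>finite F\<close>, of x] F(2) that card_level[OF j] by auto
  ultimately obtain k where
    k: "1 \<le> k" "k \<le> j" "digit_at j k (pos_in F a) \<noteq> digit_at j k (pos_in F b)"
    using digit_at_inj by blast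
  then have "digit k a \<noteq> digit k b"
    using digit_eq_digit_at[OF j] F(2) by auto
  then have "code a \<noteq> code b"
    unfolding code_def by (rule quaternary_neq[OF digit_le digit_le k(1)])
  then show False
    using \<open>code a = code b\<close> by simp
qed

lemma root_fixed:
  assumes "splits j F Fs R" "bij_betw \<phi> (Fs 0) (Fs 1)" "strict_mono_on (Fs 0) \<phi>" "\<rho> \<in> R"
  shows "\<phi> \<rho> = \<rho>"
proof -
  note f = splits_finite[OF assms(1)]
  have "\<rho> \<in> Fs 0" "\<rho> \<in> Fs 1"
    using assms(4) f(1,2) by auto
  moreover have "\<phi> \<rho> \<in> Fs 1"
    using assms(2) \<open>\<rho> \<in> Fs 0\<close> bij_betwE by blast
  moreover have "pos_in (Fs 1) (\<phi> \<rho>) = pos_in (Fs 1) \<rho>"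
    using pos_in_image[OF f(3) assms(2,3)] pos_in_splits_root[OF assms(1,4)] \<open>\<rho> \<in> Fs 0\<close> by simp
  ultimately show ?thesis
    using strict_mono_on_eq[OF strict_mono_on_pos_in[OF f(4)]] by blast
qed

text \<open>\<open>\<phi>\<close> preserves positions inside the blocks, hence all digits below \<open>j + 1\<close>,
  while digit \<open>j + 1\<close> changes from 1 to 2.\<close>

lemma code_less_transfer:
  assumes F: "F \<in> level \<F> (Suc j)" and split: "splits j F Fs R"
    and \<phi>: "bij_betw \<phi> (Fs 0) (Fs 1)" "strict_mono_on (Fs 0) \<phi>"
    and \<gamma>: "\<gamma> \<in> Fs 0 - R"
  shows "\<phi> \<gamma> \<in> Fs 1 - R" "code \<gamma> < code (\<phi> \<gamma>)"
proof -
  note s = splitsD[OF split] and f = splits_finite[OF split]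
  have "\<phi> \<gamma> \<in> Fs 1"
    using \<phi>(1) \<gamma> bij_betwE by blast
  moreover have "\<phi> \<gamma> \<notin> R"
  proof
    assume "\<phi> \<gamma> \<in> R"
    then have "\<phi> (\<phi> \<gamma>) = \<phi> \<gamma>" "\<phi> \<gamma> \<in> Fs 0"
      using root_fixed[OF split \<phi>] f(1) by auto
    then have "\<phi> \<gamma> = \<gamma>"
      using strict_mono_on_eq[OF \<phi>(2)] \<gamma> by blast
    then show False
      using \<open>\<phi> \<gamma> \<in> R\<close> \<gamma> by simp
  qed
  ultimately show right: "\<phi> \<gamma> \<in> Fs 1 - R"
    by blast
  have same_pos: "pos_in (Fs 1) (\<phi> \<gamma>) = pos_in (Fs 0) \<gamma>"
    using pos_in_image[OF f(3) \<phi>] \<gamma> by blast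
  have below: "digit k \<gamma> = digit k (\<phi> \<gamma>)" if "1 \<le> k" "k < Suc j" for k
    using digit_eq_digit_at[OF s(1), of \<gamma> k] digit_eq_digit_at[OF s(2), of "\<phi> \<gamma>" k]
      same_pos \<gamma> right that by auto
  have left_digit: "digit (Suc j) \<gamma> = 1"
    using digit_eq[OF F] pos_in_splits_left[OF split] pos_in_splits_nonroot[OF split \<gamma>] \<gamma> s(3)
    by (simp add: block_digit_def)
  have right_digit: "digit (Suc j) (\<phi> \<gamma>) = 2"
    using digit_eq[OF F] pos_in_splits_right[OF split right] binary_r_less_m[of j] s(3) right
    by (simp add: block_digit_def)
  show "code \<gamma> < code (\<phi> \<gamma>)"
    unfolding code_def
    by (rule quaternary_less[where l = "Suc j"]) (use digit_le below left_digit right_digit in auto)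
qed

lemma captures_pairE:
  assumes "captures \<F> (\<lambda>_. 2) binary_r l F C" "card C = 2"
  obtains j Fs R \<phi> c0 c1 where "F \<in> level \<F> (Suc j)" "splits j F Fs R"
    "bij_betw \<phi> (Fs 0) (Fs 1)" "strict_mono_on (Fs 0) \<phi>"
    "C = {c0, c1}" "c0 \<noteq> c1" "c0 \<subseteq> Fs 0" "\<phi> ` c0 = c1"
proof -
  have "1 \<le> l"
    using assms(1) by (simp add: captures_def)
  then obtain j where j: "l = Suc j"
    by (cases l) auto
  obtain Fs R c where split: "splits j F Fs R" and c: "bij_betw c {..<2} C"
    and blocks: "\<forall>i<2. c i \<subseteq> Fs i \<and>
      (\<exists>\<phi>. bij_betw \<phi> (Fs 0) (Fs i) \<and> strict_mono_on (Fs 0) \<phi> \<and> \<phi> ` c 0 = c i)"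
    using assms unfolding captures_def j by auto
  obtain \<phi> where "bij_betw \<phi> (Fs 0) (Fs 1)" "strict_mono_on (Fs 0) \<phi>" "\<phi> ` c 0 = c 1"
    using blocks[rule_format, of 1] by auto
  moreover have "{..<2::nat} = {0, 1}"
    by auto
  then have "C = {c 0, c 1}" "c 0 \<noteq> c 1"
    using c by (auto simp: bij_betw_def inj_on_def)
  moreover have "F \<in> level \<F> (Suc j)"
    using assms(1) j by (simp add: captures_def)
  ultimately show ?thesis
    using that split blocks by auto
qed

lemma capture_increasing_pair:
  assumes capturing: "n_capturing 2 (\<lambda>_. 2) binary_r \<F>"
    and D: "uncountable D" "\<And>a. a \<in> D \<Longrightarrow> u a < v a" "inj_on u D" "inj_on v D"
  obtains a a' where "a \<in> D" "a' \<in> D" "a \<noteq> a'"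
    "code (u a) < code (u a')" "code (v a) < code (v a')"
proof -
  define S where "S = (\<lambda>a. {u a, v a}) ` D"
  have "uncountable S"
    unfolding S_def using D(1-3) by (rule uncountable_image_doubletons)
  moreover have "\<forall>s\<in>S. finite s"
    by (auto simp: S_def)
  ultimately obtain C l F where C: "C \<subseteq> S" "card C = 2" "captures \<F> (\<lambda>_. 2) binary_r l F C"
    using capturing[unfolded n_capturing_def, rule_format, of S 0] by auto
  obtain j Fs R \<phi> c0 c1 where F: "F \<in> level \<F> (Suc j)" and split: "splits j F Fs R"
    and \<phi>: "bij_betw \<phi> (Fs 0) (Fs 1)" "strict_mono_on (Fs 0) \<phi>"
    and c: "C = {c0, c1}" "c0 \<noteq> c1" "c0 \<subseteq> Fs 0" "\<phi> ` c0 = c1"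
    using captures_pairE[OF C(3,2)] .
  obtain a a' where a: "a \<in> D" "c0 = {u a, v a}" and a': "a' \<in> D" "c1 = {u a', v a'}"
    using C(1) c(1) by (auto simp: S_def)
  have "a \<noteq> a'"
    using a(2) a'(2) c(2) by metis
  have in_left: "u a \<in> Fs 0" "v a \<in> Fs 0"
    using c(3) a(2) by auto
  have "\<phi> (u a) < \<phi> (v a)"
    using strict_mono_onD[OF \<phi>(2) in_left D(2)[OF a(1)]] .
  moreover have "{\<phi> (u a), \<phi> (v a)} = {u a', v a'}"
    using c(4) a(2) a'(2) by simp
  ultimately have \<phi>_uv: "\<phi> (u a) = u a'" "\<phi> (v a) = v a'"
    using ordered_doubleton_eq[OF _ _ D(2)[OF a'(1)]] by simp_all
  have "u a \<noteq> u a'" "v a \<noteq> v a'"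
    using D(3,4) a(1) a'(1) \<open>a \<noteq> a'\<close> by (auto dest: inj_onD)
  then have "u a \<notin> R" "v a \<notin> R"
    using root_fixed[OF split \<phi>] \<phi>_uv by metis+
  then have "code (u a) < code (u a')" "code (v a) < code (v a')"
    using code_less_transfer(2)[OF F split \<phi>] in_left \<phi>_uv by (metis DiffI)+
  then show ?thesis
    using that a(1) a'(1) \<open>a \<noteq> a'\<close> by blast
qed

end

section \<open>Rational copies of a set of reals\<close>

definition rat_intervals :: "(rat \<times> rat) set" where
  "rat_intervals = {i. fst i < snd i}"

definition affine_copy :: "rat \<times> rat \<Rightarrow> real \<Rightarrow> real" where
  "affine_copy i y = of_rat (fst i) + (of_rat (snd i) - of_rat (fst i)) * (y + 1) / 5"

definition rational_copies :: "('a \<Rightarrow> real) \<Rightarrow> real set" where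
  "rational_copies x = (\<Union>i\<in>rat_intervals. affine_copy i ` range x)"

lemma affine_copy_less_iff:
  assumes "i \<in> rat_intervals"
  shows "affine_copy i y < affine_copy i z \<longleftrightarrow> y < z"
  using assms unfolding affine_copy_def rat_intervals_def
  by (auto simp: of_rat_less divide_less_cancel mult_less_cancel_left_pos)

lemma inj_affine_copy: "i \<in> rat_intervals \<Longrightarrow> inj (affine_copy i)"
  by (rule injI) (metis affine_copy_less_iff linorder_neq_iff)

lemma affine_copy_bounds:
  assumes "i \<in> rat_intervals" "0 \<le> y" "y \<le> 3"
  shows "of_rat (fst i) < affine_copy i y" "affine_copy i y < of_rat (snd i)"
proof -
  have width: "0 < of_rat (snd i) - (of_rat (fst i) :: real)"
    using assms(1) by (simp add: rat_intervals_def of_rat_less)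
  then show "of_rat (fst i) < affine_copy i y"
    using assms(2) by (simp add: affine_copy_def)
  have "(of_rat (snd i) - of_rat (fst i)) * ((y + 1) / 5) < (of_rat (snd i) - of_rat (fst i)) * 1"
    using assms(3) width by (intro mult_strict_left_mono) auto
  then show "affine_copy i y < of_rat (snd i)"
    by (simp add: affine_copy_def)
qed

lemma countable_times_lepoll:
  assumes "countable C" "infinite A"
  shows "C \<times> A \<lesssim> A"
proof -
  have "C \<lesssim> (UNIV :: nat set)"
    using assms(1) unfolding countable_def lepoll_def by blast
  also have "(UNIV :: nat set) \<lesssim> A"
    using assms(2) infinite_le_lepoll by blast
  finally have "C \<times> A \<lesssim> A \<times> A"
    by (rule times_lepoll_mono) simp
  also have "A \<times> A \<approx> A"
    unfolding eqpoll_iff_card_of_ordIso using card_of_Times_same_infinite assms(2) by blast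
  finally show ?thesis .
qed

lemma rational_copies_lepoll:
  assumes "infinite (UNIV :: 'w set)"
  shows "rational_copies (x :: 'w \<Rightarrow> real) \<lesssim> (UNIV :: 'w set)"
proof -
  have "rational_copies x \<subseteq> (\<lambda>(i, w). affine_copy i (x w)) ` (rat_intervals \<times> UNIV)"
    by (auto simp: rational_copies_def)
  then have "rational_copies x \<lesssim> rat_intervals \<times> (UNIV :: 'w set)"
    by (rule subset_image_lepoll)
  also have "\<dots> \<lesssim> (UNIV :: 'w set)"
    using assms by (intro countable_times_lepoll) auto
  finally show ?thesis .
qed

lemma lepoll_interval_Int_rational_copies:
  fixes x :: "'w \<Rightarrow> real"
  assumes "inj x" "range x \<subseteq> {0..3}" "a < b"
  shows "(UNIV :: 'w set) \<lesssim> {a<..<b} \<inter> rational_copies x"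
proof -
  obtain p where p: "a < of_rat p" "of_rat p < b"
    using of_rat_dense[OF assms(3)] by blast
  obtain q where q: "of_rat p < (of_rat q :: real)" "of_rat q < b"
    using of_rat_dense[OF p(2)] by blast
  have i: "(p, q) \<in> rat_intervals"
    using q(1) by (simp add: rat_intervals_def of_rat_less)
  have "affine_copy (p, q) (x w) \<in> {a<..<b} \<inter> rational_copies x" for w
    using affine_copy_bounds[OF i, of "x w"] assms(2) p q i
    by (force simp: rational_copies_def)
  moreover have "inj (affine_copy (p, q) \<circ> x)"
    using inj_affine_copy[OF i] assms(1) by (rule inj_compose)
  ultimately show ?thesis
    unfolding lepoll_def by (intro exI[of _ "affine_copy (p, q) \<circ> x"]) auto
qed

lemma omega1_dense_rational_copies:
  fixes W :: "'w itself" and x :: "'w \<Rightarrow> real"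
  assumes "infinite (UNIV :: 'w set)" "inj x" "range x \<subseteq> {0..3}"
  shows "omega1_dense W (rational_copies x)"
  unfolding omega1_dense_def
proof (intro allI impI)
  fix a b :: real
  assume "a < b"
  have "{a<..<b} \<inter> rational_copies x \<lesssim> (UNIV :: 'w set)"
    using rational_copies_lepoll[OF assms(1)] by (meson inf_le2 lepoll_trans subset_imp_lepoll)
  then show "{a<..<b} \<inter> rational_copies x \<approx> (UNIV :: 'w set)"
    using lepoll_interval_Int_rational_copies[OF assms(2,3) \<open>a < b\<close>] by (rule lepoll_antisym)
qed

lemma omega1_dense_uminus:
  assumes "omega1_dense W A"
  shows "omega1_dense W (uminus ` A)"
  unfolding omega1_dense_def
proof (intro allI impI)
  fix a b :: real
  assume "a < b"
  have "{a<..<b} \<inter> uminus ` A = uminus ` ({-b<..<-a} \<inter> A)"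
    by force
  also have "\<dots> \<approx> {-b<..<-a} \<inter> A"
    by (rule inj_on_image_eqpoll_self) (simp add: inj_on_def)
  also have "\<dots> \<approx> (UNIV :: 'a set)"
    using assms \<open>a < b\<close> unfolding omega1_dense_def by simp
  finally show "{a<..<b} \<inter> uminus ` A \<approx> (UNIV :: 'a set)" .
qed

lemma rational_copies_reversal:
  fixes x :: "'a \<Rightarrow> real"
  assumes "uncountable (UNIV :: 'a set)"
    and maps: "\<And>s. s \<in> rational_copies x \<Longrightarrow> g s \<in> rational_copies x"
    and reverses: "\<And>s t. s \<in> rational_copies x \<Longrightarrow> t \<in> rational_copies x \<Longrightarrow> s < t \<Longrightarrow> g t < g s"
  obtains D H where "uncountable D" "\<And>a a'. a \<in> D \<Longrightarrow> a' \<in> D \<Longrightarrow> x a < x a' \<Longrightarrow> x (H a') < x (H a)"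
proof -
  define i0 where "i0 = ((0::rat), (1::rat))"
  have i0: "i0 \<in> rat_intervals"
    by (simp add: i0_def rat_intervals_def)
  then have copy: "affine_copy i0 (x a) \<in> rational_copies x" for a
    by (auto simp: rational_copies_def)
  have "\<exists>j b. j \<in> rat_intervals \<and> g (affine_copy i0 (x a)) = affine_copy j (x b)" for a
    using maps[OF copy] unfolding rational_copies_def by blast
  then obtain J H where JH: "\<And>a. J a \<in> rat_intervals" "\<And>a. g (affine_copy i0 (x a)) = affine_copy (J a) (x (H a))"
    by metis
  have "\<exists>j\<in>rat_intervals. uncountable {a. J a = j}"
  proof (rule ccontr)
    assume "\<not> ?thesis"
    then have "countable (\<Union>j\<in>rat_intervals. {a. J a = j})"
      by (intro countable_UN) auto
    moreover have "(\<Union>j\<in>rat_intervals. {a. J a = j}) = UNIV"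
      using JH(1) by auto
    ultimately show False
      using assms(1) by simp
  qed
  then obtain j where j: "j \<in> rat_intervals" "uncountable {a. J a = j}"
    by blast
  have "x (H a') < x (H a)" if "a \<in> {a. J a = j}" "a' \<in> {a. J a = j}" "x a < x a'" for a a'
  proof -
    have "g (affine_copy i0 (x a')) < g (affine_copy i0 (x a))"
      using reverses[OF copy copy] affine_copy_less_iff[OF i0] that(3) by blast
    then show ?thesis
      using JH(2) that(1,2) affine_copy_less_iff[OF j(1)] by simp
  qed
  with j(2) show ?thesis
    using that by blast
qed

section \<open>Non-isomorphism\<close>

lemma inj_on_reversal:
  fixes x :: "'a \<Rightarrow> 'b::linorder"
  assumes "inj x"
    and reverses: "\<And>a a'. a \<in> D \<Longrightarrow> a' \<in> D \<Longrightarrow> x a < x a' \<Longrightarrow> x (H a') < x (H a)"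
  shows "inj_on H D"
proof (rule inj_onI, rule ccontr)
  fix a a' assume a: "a \<in> D" "a' \<in> D" "H a = H a'" "a \<noteq> a'"
  then have "x a \<noteq> x a'"
    using \<open>inj x\<close> by (auto dest: injD)
  then have "x a < x a' \<or> x a' < x a"
    by (rule neq_iff[THEN iffD1])
  then show False
    using reverses[OF a(1,2)] reverses[OF a(2,1)] a(3) by auto
qed

lemma countable_fixed_points_reversal:
  fixes x :: "'a \<Rightarrow> 'b::linorder"
  assumes "inj x"
    and reverses: "\<And>a a'. a \<in> D \<Longrightarrow> a' \<in> D \<Longrightarrow> x a < x a' \<Longrightarrow> x (H a') < x (H a)"
  shows "countable {a \<in> D. H a = a}"
proof (cases "\<exists>a0\<in>D. H a0 = a0")
  case True
  then obtain a0 where a0: "a0 \<in> D" "H a0 = a0"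
    by blast
  have "a = a0" if "a \<in> D" "H a = a" for a
  proof (rule ccontr)
    assume "a \<noteq> a0"
    then have "x a \<noteq> x a0"
      using \<open>inj x\<close> by (auto dest: injD)
    then have "x a < x a0 \<or> x a0 < x a"
      by (rule neq_iff[THEN iffD1])
    then show False
      using reverses[OF that(1) a0(1)] reverses[OF a0(1) that(1)] a0(2) that(2) by auto
  qed
  then have "{a \<in> D. H a = a} \<subseteq> {a0}"
    by blast
  then show ?thesis
    by (rule countable_subset) simp
next
  case False
  then have "{a \<in> D. H a = a} = {}"
    by blast
  then show ?thesis
    by (metis countable_empty)
qed

lemma uncountable_moved_up_or_down:
  fixes H :: "'a::linorder \<Rightarrow> 'a"
  assumes "uncountable D" "countable {a \<in> D. H a = a}"
  shows "uncountable {a \<in> D. a < H a} \<or> uncountable {a \<in> D. H a < a}"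
proof (rule ccontr)
  assume "\<not> ?thesis"
  then have "countable ({a \<in> D. a < H a} \<union> {a \<in> D. H a < a} \<union> {a \<in> D. H a = a})"
    using assms(2) by simp
  moreover have "{a \<in> D. a < H a} \<union> {a \<in> D. H a < a} \<union> {a \<in> D. H a = a} = D"
    by (auto simp: neq_iff)
  ultimately show False
    using assms(1) by simp
qed

context binary_scheme
begin

lemma no_uncountable_code_reversal:
  assumes capturing: "n_capturing 2 (\<lambda>_. 2) binary_r \<F>" and "uncountable D"
    and reverses: "\<And>a a'. a \<in> D \<Longrightarrow> a' \<in> D \<Longrightarrow> code a < code a' \<Longrightarrow> code (H a') < code (H a)"
  shows False
proof -
  have "inj_on H D"
    using inj_code reverses by (rule inj_on_reversal)
  then have inj_H: "inj_on H {a \<in> D. P a}" for P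
    by (rule inj_on_subset) blast
  have no_increasing_pair: False
    if "a \<in> D" "a' \<in> D" "code a < code a'" "code (H a) < code (H a')" for a a'
    using reverses[OF that(1-3)] that(4) by simp
  have "countable {a \<in> D. H a = a}"
    using inj_code reverses by (rule countable_fixed_points_reversal)
  with \<open>uncountable D\<close> have "uncountable {a \<in> D. a < H a} \<or> uncountable {a \<in> D. H a < a}"
    by (rule uncountable_moved_up_or_down)
  then show False
  proof
    assume "uncountable {a \<in> D. a < H a}"
    then obtain a a' where "a \<in> {a \<in> D. a < H a}" "a' \<in> {a \<in> D. a < H a}" "a \<noteq> a'"
      "code a < code a'" "code (H a) < code (H a')"
      by (rule capture_increasing_pair[OF capturing, of _ "\<lambda>a. a" H]) (use inj_H in auto)
    then show False
      using no_increasing_pair by blast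
  next
    assume "uncountable {a \<in> D. H a < a}"
    then obtain a a' where "a \<in> {a \<in> D. H a < a}" "a' \<in> {a \<in> D. H a < a}" "a \<noteq> a'"
      "code (H a) < code (H a')" "code a < code a'"
      by (rule capture_increasing_pair[OF capturing, of _ H "\<lambda>a. a"]) (use inj_H in auto)
    then show False
      using no_increasing_pair by blast
  qed
qed

lemma not_order_isomorphic_uminus:
  assumes "n_capturing 2 (\<lambda>_. 2) binary_r \<F>" "uncountable (UNIV :: 'a set)"
  shows "\<not> order_isomorphic (rational_copies code) (uminus ` rational_copies code)"
proof
  assume "order_isomorphic (rational_copies code) (uminus ` rational_copies code)"
  then obtain f where f: "bij_betw f (rational_copies code) (uminus ` rational_copies code)"
    "strict_mono_on (rational_copies code) f"
    unfolding order_isomorphic_def by blast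
  have "- f s \<in> rational_copies code" if "s \<in> rational_copies code" for s
    using bij_betwE[OF f(1)] that by force
  moreover have "- f t < - f s" if "s \<in> rational_copies code" "t \<in> rational_copies code" "s < t" for s t
    using strict_mono_onD[OF f(2) that] by simp
  ultimately obtain D H where "uncountable D"
    "\<And>a a'. a \<in> D \<Longrightarrow> a' \<in> D \<Longrightarrow> code a < code a' \<Longrightarrow> code (H a') < code (H a)"
    using rational_copies_reversal[OF assms(2), of code "\<lambda>s. - f s"] by blast
  then show False
    by (rule no_uncountable_code_reversal[OF assms(1)])
qed

end

theorem mainTheorem14:
  fixes W :: "'w::wellorder itself"
  assumes omega1_uncountable: "uncountable (UNIV :: 'w set)"
    and omega1_segments: "\<forall>x::'w. countable {y. y < x}"
    and CA2: "CA W 2"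
  shows "\<exists>A B :: real set. omega1_dense W A \<and> omega1_dense W B \<and> \<not> order_isomorphic A B"
proof -
  obtain \<F> :: "'w set set" where scheme: "construction_scheme UNIV binary_m (\<lambda>_. 2) binary_r \<F>"
    and capturing: "n_capturing 2 (\<lambda>_. 2) binary_r \<F>"
    using CA2[unfolded CA_def, rule_format, of binary_m "\<lambda>_. 2" binary_r] is_type_binary by auto
  interpret binary_scheme \<F>
    by (rule binary_scheme.intro[OF scheme])
  have "omega1_dense W (rational_copies code)"
    using omega1_uncountable inj_code code_bounds
    by (intro omega1_dense_rational_copies) (auto simp: countable_finite)
  moreover have "omega1_dense W (uminus ` rational_copies code)"
    using calculation by (rule omega1_dense_uminus)
  moreover have "\<not> order_isomorphic (rational_copies code) (uminus ` rational_copies code)"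
    using capturing omega1_uncountable by (rule not_order_isomorphic_uminus)
  ultimately show ?thesis
    by blast
qed

end
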